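(* Let $N\ge 2$, $a\in\mathbb{R}$, and let $P\in\mathbb{R}^{N\times N}$ be a symmetric, doubly stochastic matrix with nonnegative entries whose eigenvalues satisfy $-1<\lambda_N(P)\le\dots\le\lambda_2(P)<\lambda_1(P)=1$. Consider the state $x_{t+1}=ax_t+r_t$ and observations $y_{i,t}=x_t+w_{i,t}$, where the innovations $r_t$ and observation noises $w_{i,t}$ have zero mean, and for a signal weight $\alpha\in(0,1]$ the estimates $$\hat{x}_{i,t+1}=a\Big(\sum_{j=1}^N p_{ij}\hat{x}_{j,t}+\alpha(y_{i,t}-\hat{x}_{i,t})\Big),\qquad \tilde{x}_{i,t+1}=a\Big(\sum_{j=1}^N p_{ij}\tilde{x}_{j,t}+\alpha\Big(\sum_{j=1}^N p_{ij}y_{j,t}-\tilde{x}_{i,t}\Big)\Big).$$ Call the estimates asymptotically unbiased for $\alpha$ if, for every choice of initial estimates, $\mathbb{E}[\hat{x}_{i,t}-x_t]\to 0$ and $\mathbb{E}[\tilde{x}_{i,t}-x_t]\to0$ as $t\to\infty$ for all $i$ (equivalently, the spectral radius of $a(P-\alpha I_N)$ is less than $1$). Then there exists $\alpha\in(0,1]$ for which the estimates are asymptotically unbiased if and only if $$|a|<\frac{2}{1-\lambda_N(P)}.$$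
   Context: $a$ is the (known) rate of change of the state; $x_0$ is a random initial state with finite mean. *)

theory Defs
  imports "HOL-Probability.Probability"
begin

text \<open>Matrix notions. Matrices are indexed by a finite type 'n with N = CARD('n).\<close>

definition symmetric_matrix :: "real^'n^'n \<Rightarrow> bool" where
  "symmetric_matrix P \<longleftrightarrow> transpose P = P"

definition doubly_stochastic :: "real^'n::finite^'n \<Rightarrow> bool" where
  "doubly_stochastic P \<longleftrightarrow>
     (\<forall>i j. P $ i $ j \<ge> 0) \<and> (\<forall>i. (\<Sum>j\<in>UNIV. P $ i $ j) = 1) \<and> (\<forall>j. (\<Sum>i\<in>UNIV. P $ i $ j) = 1)"

definition eigenvalues :: "real^'n::finite^'n \<Rightarrow> real set" where
  "eigenvalues P = {e. \<exists>v. v \<noteq> 0 \<and> P *v v = e *\<^sub>R v}"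

definition lambda_min :: "real^'n::finite^'n \<Rightarrow> real" where
  "lambda_min P = Min (eigenvalues P)"

text \<open>Eigenvalue condition  -1 < lambda_N <= ... <= lambda_2 < lambda_1 = 1
  (for symmetric P, multiplicity = dimension of the eigenspace).\<close>
definition spectral_condition :: "real^'n::finite^'n \<Rightarrow> bool" where
  "spectral_condition P \<longleftrightarrow>
     1 \<in> eigenvalues P \<and> (\<forall>e\<in>eigenvalues P. -1 < e \<and> e \<le> 1)
     \<and> dim {v. P *v v = v} = 1"

primrec state :: "real \<Rightarrow> ('w \<Rightarrow> real) \<Rightarrow> (nat \<Rightarrow> 'w \<Rightarrow> real) \<Rightarrow> nat \<Rightarrow> 'w \<Rightarrow> real" where
  "state a x0 r 0 = x0"
| "state a x0 r (Suc t) = (\<lambda>\<omega>. a * state a x0 r t \<omega> + r t \<omega>)"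

definition obs :: "real \<Rightarrow> ('w \<Rightarrow> real) \<Rightarrow> (nat \<Rightarrow> 'w \<Rightarrow> real) \<Rightarrow> ('n \<Rightarrow> nat \<Rightarrow> 'w \<Rightarrow> real)
    \<Rightarrow> 'n \<Rightarrow> nat \<Rightarrow> 'w \<Rightarrow> real" where
  "obs a x0 r w i t \<omega> = state a x0 r t \<omega> + w i t \<omega>"

primrec est_hat :: "real^'n::finite^'n \<Rightarrow> real \<Rightarrow> real \<Rightarrow> ('w \<Rightarrow> real) \<Rightarrow> (nat \<Rightarrow> 'w \<Rightarrow> real)
    \<Rightarrow> ('n \<Rightarrow> nat \<Rightarrow> 'w \<Rightarrow> real) \<Rightarrow> ('w \<Rightarrow> real^'n) \<Rightarrow> nat \<Rightarrow> 'w \<Rightarrow> real^'n" where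
  "est_hat P a \<alpha> x0 r w c 0 = c"
| "est_hat P a \<alpha> x0 r w c (Suc t) = (\<lambda>\<omega>. \<chi> i.
     a * ((\<Sum>j\<in>UNIV. P $ i $ j * est_hat P a \<alpha> x0 r w c t \<omega> $ j)
          + \<alpha> * (obs a x0 r w i t \<omega> - est_hat P a \<alpha> x0 r w c t \<omega> $ i)))"

primrec est_tilde :: "real^'n::finite^'n \<Rightarrow> real \<Rightarrow> real \<Rightarrow> ('w \<Rightarrow> real) \<Rightarrow> (nat \<Rightarrow> 'w \<Rightarrow> real)
    \<Rightarrow> ('n \<Rightarrow> nat \<Rightarrow> 'w \<Rightarrow> real) \<Rightarrow> ('w \<Rightarrow> real^'n) \<Rightarrow> nat \<Rightarrow> 'w \<Rightarrow> real^'n" where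
  "est_tilde P a \<alpha> x0 r w c 0 = c"
| "est_tilde P a \<alpha> x0 r w c (Suc t) = (\<lambda>\<omega>. \<chi> i.
     a * ((\<Sum>j\<in>UNIV. P $ i $ j * est_tilde P a \<alpha> x0 r w c t \<omega> $ j)
          + \<alpha> * ((\<Sum>j\<in>UNIV. P $ i $ j * obs a x0 r w j t \<omega>) - est_tilde P a \<alpha> x0 r w c t \<omega> $ i)))"

definition asymp_unbiased :: "'w measure \<Rightarrow> real^'n::finite^'n \<Rightarrow> real \<Rightarrow> ('w \<Rightarrow> real)
    \<Rightarrow> (nat \<Rightarrow> 'w \<Rightarrow> real) \<Rightarrow> ('n \<Rightarrow> nat \<Rightarrow> 'w \<Rightarrow> real) \<Rightarrow> real \<Rightarrow> bool" where
  "asymp_unbiased M P a x0 r w \<alpha> \<longleftrightarrow>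
     (\<forall>c. (\<forall>i. integrable M (\<lambda>\<omega>. c \<omega> $ i)) \<longrightarrow>
        (\<forall>i. ((\<lambda>t. integral\<^sup>L M (\<lambda>\<omega>. est_hat P a \<alpha> x0 r w c t \<omega> $ i - state a x0 r t \<omega>))
                \<longlonglongrightarrow> 0)
           \<and> ((\<lambda>t. integral\<^sup>L M (\<lambda>\<omega>. est_tilde P a \<alpha> x0 r w c t \<omega> $ i - state a x0 r t \<omega>))
                \<longlonglongrightarrow> 0)))"

end

theory Submission
  imports Defs
begin

(*
  Taking expectations, the mean errors of both estimators obey the same deterministic
  recursion m(t+1) = a (P - \<alpha> I) m(t): the noises have zero mean and the rows of P sum
  to 1, so the common state cancels.  Since every initial mean error is realised by some
  initial estimate, unbiasedness for \<alpha> means that all iterates of a (P - \<alpha> I) tend to 0.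
  For symmetric P this holds iff |a (e - \<alpha>)| < 1 for every eigenvalue e of P, because the
  norm of a self-adjoint map is attained at an eigenvalue (via the extrema of the Rayleigh
  quotient).  The spectrum lies in [\<lambda>_N, 1] and contains both endpoints, so a suitable \<alpha>
  exists iff |a| (1 - \<lambda>_N) < 2, the midpoint \<alpha> = (1 + \<lambda>_N) / 2 being optimal.
*)

lemma selfadjoint_nonneg_form_kernel:
  fixes g :: "'a::real_inner \<Rightarrow> 'a"
  assumes lin: "linear g" and sa: "\<And>x y. x \<bullet> g y = g x \<bullet> y"
    and nonneg: "\<And>y. 0 \<le> y \<bullet> g y" and zero: "x \<bullet> g x = 0"
  shows "g x = 0"
proof -
  \<comment> \<open>\<open>x\<close> minimises the nonnegative form, so moving from \<open>x\<close> in any direction \<open>y\<close>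
      with \<open>y \<bullet> g x \<noteq> 0\<close> would make the form negative\<close>
  have orth: "y \<bullet> g x = 0" for y
  proof (rule ccontr)
    assume "y \<bullet> g x \<noteq> 0"
    define c where "c = y \<bullet> g x"
    define q where "q = y \<bullet> g y"
    define t where "t = - c / (q + 1)"
    have q: "0 \<le> q" by (simp add: q_def nonneg)
    have "0 \<le> (x + t *\<^sub>R y) \<bullet> g (x + t *\<^sub>R y)" by (rule nonneg)
    also have "\<dots> = 2 * t * c + t\<^sup>2 * q"
      using zero sa[of x y]
      by (simp add: linear_add[OF lin] linear_scale[OF lin] inner_add_left inner_add_right
          c_def q_def power2_eq_square inner_commute algebra_simps)
    also have "\<dots> = - c\<^sup>2 * (q + 2) / (q + 1)\<^sup>2"
      using q by (simp add: t_def power2_eq_square divide_simps) (simp add: algebra_simps)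
    also have "\<dots> < 0"
      using q \<open>y \<bullet> g x \<noteq> 0\<close> by (simp add: c_def divide_neg_pos mult_neg_pos)
    finally show False by simp
  qed
  show "g x = 0" using orth[of "g x"] by simp
qed

lemma selfadjoint_min_eigenvector:
  fixes f :: "'a::euclidean_space \<Rightarrow> 'a"
  assumes lin: "linear f" and sa: "\<And>x y. x \<bullet> f y = f x \<bullet> y"
  obtains e v where "v \<noteq> 0" "f v = e *\<^sub>R v" "\<And>x. e * (x \<bullet> x) \<le> x \<bullet> f x"
proof -
  have cont: "continuous_on (sphere 0 1) (\<lambda>x. x \<bullet> f x)"
    using lin by (intro continuous_intros linear_continuous_on) (simp add: linear_conv_bounded_linear)
  obtain b :: 'a where "b \<in> Basis" using nonempty_Basis by blast
  then have "sphere (0::'a) 1 \<noteq> {}" by (metis norm_Basis mem_sphere_0 empty_iff)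
  then obtain u where u: "u \<in> sphere 0 1" and min: "\<And>y. y \<in> sphere 0 1 \<Longrightarrow> u \<bullet> f u \<le> y \<bullet> f y"
    using continuous_attains_inf[OF compact_sphere _ cont] by blast
  define e where "e = u \<bullet> f u"
  have rayleigh: "e * (x \<bullet> x) \<le> x \<bullet> f x" for x
  proof (cases "x = 0")
    case True then show ?thesis using lin by (simp add: linear_0)
  next
    case False
    have "e \<le> (inverse (norm x) *\<^sub>R x) \<bullet> f (inverse (norm x) *\<^sub>R x)"
      unfolding e_def by (rule min) (simp add: False)
    also have "\<dots> = (x \<bullet> f x) / (x \<bullet> x)"
      using False by (simp add: linear_scale[OF lin] field_simps power2_eq_square flip: power2_norm_eq_inner)
    finally show ?thesis using False by (simp add: field_simps)
  qed
  define g where "g x = f x - e *\<^sub>R x" for x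
  have "g u = 0"
  proof (rule selfadjoint_nonneg_form_kernel[of g])
    show "linear g"
      by (rule linearI) (simp_all add: g_def linear_add[OF lin] linear_scale[OF lin] algebra_simps)
  qed (use sa rayleigh u in \<open>auto simp: g_def e_def inner_diff_left inner_diff_right
        inner_commute dot_square_norm\<close>)
  moreover have "u \<noteq> 0" using u by auto
  ultimately show ?thesis using that rayleigh by (simp add: g_def)
qed

lemma selfadjoint_norm_le_form_bound:
  fixes g :: "'a::real_inner \<Rightarrow> 'a"
  assumes lin: "linear g" and sa: "\<And>x y. x \<bullet> g y = g x \<bullet> y"
    and bound: "\<And>x. \<bar>x \<bullet> g x\<bar> \<le> \<rho> * (x \<bullet> x)"
  shows "norm (g v) \<le> \<rho> * norm v"
proof (cases "g v = 0")
  case True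
  have "0 \<le> \<rho> * (v \<bullet> v)" using bound[of v] by linarith
  then have "0 \<le> \<rho> \<or> v = 0"
    by (cases "v = 0") (auto simp: zero_le_mult_iff dest: inner_gt_zero_iff[THEN iffD2])
  then show ?thesis using True by auto
next
  case False
  have polarization: "4 * (x \<bullet> g y) \<le> 2 * \<rho> * (x \<bullet> x + y \<bullet> y)" for x y
  proof -
    have "4 * (x \<bullet> g y) = (x + y) \<bullet> g (x + y) - (x - y) \<bullet> g (x - y)"
      using sa[of y x] by (simp add: linear_add[OF lin] linear_diff[OF lin] inner_add_left
          inner_add_right inner_diff_left inner_diff_right inner_commute)
    also have "\<dots> \<le> \<rho> * ((x + y) \<bullet> (x + y)) + \<rho> * ((x - y) \<bullet> (x - y))"
      using bound[of "x + y"] bound[of "x - y"] by linarith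
    also have "\<dots> = 2 * \<rho> * (x \<bullet> x + y \<bullet> y)"
      by (simp add: inner_add_left inner_add_right inner_diff_left inner_diff_right
          inner_commute algebra_simps)
    finally show ?thesis .
  qed
  define s where "s = norm v / norm (g v)"
  have v: "v \<noteq> 0" using False lin by (auto simp: linear_0)
  \<comment> \<open>polarization at \<open>x = s g v\<close>, \<open>y = v\<close>, with \<open>s\<close> balancing the two squares\<close>
  have "4 * s * (norm (g v))\<^sup>2 \<le> 2 * \<rho> * (s\<^sup>2 * (norm (g v))\<^sup>2 + (norm v)\<^sup>2)"
    using polarization[of "s *\<^sub>R g v" v] by (simp add: dot_square_norm power2_eq_square algebra_simps)
  then have "4 * norm v * norm (g v) \<le> 4 * \<rho> * (norm v)\<^sup>2"
    using False by (simp add: s_def field_simps power2_eq_square)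
  then show ?thesis using v by (simp add: power2_eq_square)
qed

lemma selfadjoint_norm_le_eigenvalue:
  fixes f :: "'a::euclidean_space \<Rightarrow> 'a"
  assumes lin: "linear f" and sa: "\<And>x y. x \<bullet> f y = f x \<bullet> y"
  obtains e v where "v \<noteq> 0" "f v = e *\<^sub>R v" "\<And>x. norm (f x) \<le> \<bar>e\<bar> * norm x"
proof -
  obtain e1 v1 where v1: "v1 \<noteq> 0" "f v1 = e1 *\<^sub>R v1" and lower: "\<And>x. e1 * (x \<bullet> x) \<le> x \<bullet> f x"
    using selfadjoint_min_eigenvector[OF lin sa] by blast
  have lin': "linear (\<lambda>x. - f x)" using lin by (simp add: linear_compose_neg)
  have sa': "x \<bullet> - f y = - f x \<bullet> y" for x y using sa by simp
  obtain e2 v2 where v2: "v2 \<noteq> 0" "- f v2 = e2 *\<^sub>R v2" and upper: "\<And>x. e2 * (x \<bullet> x) \<le> x \<bullet> - f x"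
    using selfadjoint_min_eigenvector[OF lin' sa'] by blast
  have v2': "f v2 = (- e2) *\<^sub>R v2" using v2(2) by (metis minus_minus scaleR_minus_left)
  define k where "k = max \<bar>e1\<bar> \<bar>e2\<bar>"
  have "\<bar>x \<bullet> f x\<bar> \<le> k * (x \<bullet> x)" for x
  proof -
    have "- k * (x \<bullet> x) \<le> e1 * (x \<bullet> x)" "- e2 * (x \<bullet> x) \<le> k * (x \<bullet> x)"
      by (intro mult_right_mono; simp add: k_def)+
    then show ?thesis using lower[of x] upper[of x, unfolded inner_minus_right] by linarith
  qed
  then have bound: "norm (f x) \<le> k * norm x" for x
    by (rule selfadjoint_norm_le_form_bound[OF lin sa])
  show ?thesis
  proof (cases "\<bar>e2\<bar> \<le> \<bar>e1\<bar>")
    case True then show ?thesis using that[OF v1] bound by (simp add: k_def max_def)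
  next
    case False then show ?thesis using that[OF v2(1) v2'] bound by (simp add: k_def max_def)
  qed
qed

lemma selfadjoint_iterates_tendsto_zero_iff:
  fixes f :: "'a::euclidean_space \<Rightarrow> 'a"
  assumes lin: "linear f" and sa: "\<And>x y. x \<bullet> f y = f x \<bullet> y"
  shows "(\<forall>v. (\<lambda>t. (f ^^ t) v) \<longlonglongrightarrow> 0) \<longleftrightarrow> (\<forall>e v. v \<noteq> 0 \<longrightarrow> f v = e *\<^sub>R v \<longrightarrow> \<bar>e\<bar> < 1)"
proof safe
  fix e v assume lim: "\<forall>v. (\<lambda>t. (f ^^ t) v) \<longlonglongrightarrow> 0" and v: "v \<noteq> 0" "f v = e *\<^sub>R v"
  have iter: "(f ^^ t) v = e ^ t *\<^sub>R v" for t
    by (induction t) (simp_all add: v(2) linear_scale[OF lin])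
  show "\<bar>e\<bar> < 1"
  proof (rule ccontr)
    assume "\<not> \<bar>e\<bar> < 1"
    then have "1 \<le> \<bar>e\<bar> ^ t" for t by (simp add: one_le_power)
    then have "norm v \<le> norm ((f ^^ t) v)" for t
      using mult_right_mono[of 1 "\<bar>e\<bar> ^ t" "norm v"] by (simp add: iter power_abs)
    moreover have "(\<lambda>t. norm ((f ^^ t) v)) \<longlonglongrightarrow> 0" using lim tendsto_norm_zero by blast
    ultimately have "norm v \<le> 0" by (intro tendsto_lowerbound) (auto simp: trivial_limit_sequentially)
    then show False using v(1) by simp
  qed
next
  fix v assume eig: "\<forall>e v. v \<noteq> 0 \<longrightarrow> f v = e *\<^sub>R v \<longrightarrow> \<bar>e\<bar> < 1"
  obtain e u where "u \<noteq> 0" "f u = e *\<^sub>R u" and bound: "\<And>x. norm (f x) \<le> \<bar>e\<bar> * norm x"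
    using selfadjoint_norm_le_eigenvalue[OF lin sa] by blast
  then have e: "\<bar>e\<bar> < 1" using eig by blast
  have decay: "norm ((f ^^ t) v) \<le> \<bar>e\<bar> ^ t * norm v" for t
  proof (induction t)
    case (Suc t)
    have "norm ((f ^^ Suc t) v) \<le> \<bar>e\<bar> * norm ((f ^^ t) v)" using bound by simp
    also have "\<dots> \<le> \<bar>e\<bar> * (\<bar>e\<bar> ^ t * norm v)" using Suc by (simp add: mult_left_mono)
    finally show ?case by simp
  qed simp
  show "(\<lambda>t. (f ^^ t) v) \<longlonglongrightarrow> 0"
    by (rule Lim_null_comparison[OF always_eventually[OF allI[OF decay]]])
      (use e in \<open>intro tendsto_mult_left_zero LIMSEQ_power_zero, simp\<close>)
qed

lemma symmetric_matrix_inner: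
  fixes P :: "real^'n^'n"
  assumes "symmetric_matrix P"
  shows "x \<bullet> (P *v y) = (P *v x) \<bullet> y"
proof -
  have "x \<bullet> (P *v y) = (x v* P) \<bullet> y" by (simp add: dot_lmul_matrix)
  also have "x v* P = P *v x"
    using assms by (metis symmetric_matrix_def transpose_transpose vector_transpose_matrix)
  finally show ?thesis .
qed

lemma finite_eigenvalues:
  fixes P :: "real^'n::finite^'n"
  assumes sym: "symmetric_matrix P"
  shows "finite (eigenvalues P)"
proof -
  define vec where "vec e = (SOME v. v \<noteq> 0 \<and> P *v v = e *\<^sub>R v)" for e
  have vec: "vec e \<noteq> 0" "P *v vec e = e *\<^sub>R vec e" if "e \<in> eigenvalues P" for e
    using someI_ex[of "\<lambda>v. v \<noteq> 0 \<and> P *v v = e *\<^sub>R v"] that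
    unfolding vec_def eigenvalues_def by auto
  have inj: "inj_on vec (eigenvalues P)"
  proof (rule inj_onI)
    fix e e' assume e: "e \<in> eigenvalues P" "e' \<in> eigenvalues P" "vec e = vec e'"
    then have "e *\<^sub>R vec e = e' *\<^sub>R vec e" using vec[of e] vec[of e'] by metis
    then show "e = e'" using vec(1)[OF e(1)] by simp
  qed
  have "pairwise orthogonal (vec ` eigenvalues P)"
  proof (rule pairwiseI, clarify)
    fix e e' assume e: "e \<in> eigenvalues P" "e' \<in> eigenvalues P" "vec e \<noteq> vec e'"
    have "e * (vec e \<bullet> vec e') = (P *v vec e) \<bullet> vec e'" using vec(2)[OF e(1)] by simp
    also have "\<dots> = vec e \<bullet> (P *v vec e')" using symmetric_matrix_inner[OF sym] by simp
    also have "\<dots> = e' * (vec e \<bullet> vec e')" using vec(2)[OF e(2)] by simp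
    finally show "orthogonal (vec e) (vec e')" using e(3) by (auto simp: orthogonal_def)
  qed
  moreover have "0 \<notin> vec ` eigenvalues P" using vec(1) by force
  ultimately have "independent (vec ` eigenvalues P)" by (rule pairwise_orthogonal_independent)
  then have "finite (vec ` eigenvalues P)" using independent_bound by blast
  then show ?thesis using inj finite_imageD by blast
qed

lemma lambda_min_eigenvalue:
  fixes P :: "real^'n::finite^'n"
  assumes "symmetric_matrix P" and "eigenvalues P \<noteq> {}"
  shows "lambda_min P \<in> eigenvalues P" and "\<And>e. e \<in> eigenvalues P \<Longrightarrow> lambda_min P \<le> e"
  using finite_eigenvalues[OF assms(1)] assms(2) by (simp_all add: lambda_min_def)

lemma lambda_min_less_one:
  fixes P :: "real^'n::finite^'n"
  assumes sym: "symmetric_matrix P" and spec: "spectral_condition P" and N: "CARD('n) \<ge> 2"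
  shows "lambda_min P < 1"
proof (rule ccontr)
  assume "\<not> lambda_min P < 1"
  moreover have "1 \<in> eigenvalues P" and "\<And>e. e \<in> eigenvalues P \<Longrightarrow> e \<le> 1"
    using spec by (auto simp: spectral_condition_def)
  moreover have "lambda_min P \<le> e" if "e \<in> eigenvalues P" for e
    using lambda_min_eigenvalue(2)[OF sym _ that] that by blast
  ultimately have one: "e = 1" if "e \<in> eigenvalues P" for e
    using that by force
  \<comment> \<open>so \<open>P - I\<close> is self-adjoint with spectrum \<open>{0}\<close>, hence zero\<close>
  define g where "g x = P *v x - x" for x
  have lin: "linear g"
    by (rule linearI) (simp_all add: g_def matrix_vector_right_distrib matrix_vector_mult_scaleR algebra_simps)
  have sa: "x \<bullet> g y = g x \<bullet> y" for x y
    using symmetric_matrix_inner[OF sym, of x y] by (simp add: g_def inner_diff_left inner_diff_right inner_commute)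
  obtain e u where "u \<noteq> 0" "g u = e *\<^sub>R u" and bound: "\<And>x. norm (g x) \<le> \<bar>e\<bar> * norm x"
    using selfadjoint_norm_le_eigenvalue[OF lin sa] by blast
  then have "P *v u = (1 + e) *\<^sub>R u" by (simp add: g_def algebra_simps)
  then have "e = 0" using one[of "1 + e"] \<open>u \<noteq> 0\<close> by (auto simp: eigenvalues_def)
  then have "P *v v = v" for v using bound[of v] by (simp add: g_def)
  then have "{v. P *v v = v} = UNIV" by blast
  then have "dim {v. P *v v = v} = CARD('n)" by (simp add: dimension_def)
  then show False using spec N by (simp add: spectral_condition_def)
qed

definition mean_error_step :: "real^'n^'n \<Rightarrow> real \<Rightarrow> real \<Rightarrow> real^'n \<Rightarrow> real^'n" where
  "mean_error_step P a \<alpha> v = a *\<^sub>R (P *v v - \<alpha> *\<^sub>R v)"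

lemma mean_error_step_iterates_tendsto_zero_iff:
  fixes P :: "real^'n::finite^'n"
  assumes sym: "symmetric_matrix P"
  shows "(\<forall>v. (\<lambda>t. (mean_error_step P a \<alpha> ^^ t) v) \<longlonglongrightarrow> 0)
           \<longleftrightarrow> (\<forall>e\<in>eigenvalues P. \<bar>a * (e - \<alpha>)\<bar> < 1)"
proof -
  let ?G = "mean_error_step P a \<alpha>"
  have lin: "linear ?G"
    by (rule linearI) (simp_all add: mean_error_step_def matrix_vector_right_distrib
        matrix_vector_mult_scaleR algebra_simps)
  have sa: "x \<bullet> ?G y = ?G x \<bullet> y" for x y
    using symmetric_matrix_inner[OF sym, of x y]
    by (simp add: mean_error_step_def inner_diff_left inner_diff_right inner_commute)
  have shift: "?G v - (a * (e - \<alpha>)) *\<^sub>R v = a *\<^sub>R (P *v v - e *\<^sub>R v)" for e v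
    by (simp add: mean_error_step_def scaleR_diff_right scaleR_diff_left right_diff_distrib)
  have "(\<forall>\<mu> v. v \<noteq> 0 \<longrightarrow> ?G v = \<mu> *\<^sub>R v \<longrightarrow> \<bar>\<mu>\<bar> < 1) \<longleftrightarrow> (\<forall>e\<in>eigenvalues P. \<bar>a * (e - \<alpha>)\<bar> < 1)"
  proof (cases "a = 0")
    case True then show ?thesis by (simp add: mean_error_step_def)
  next
    case False
    then have eigenpair: "?G v = (a * (e - \<alpha>)) *\<^sub>R v \<longleftrightarrow> P *v v = e *\<^sub>R v" for e v
      using shift[of v e] by (metis right_minus_eq scaleR_eq_0_iff)
    show ?thesis
    proof
      assume "\<forall>\<mu> v. v \<noteq> 0 \<longrightarrow> ?G v = \<mu> *\<^sub>R v \<longrightarrow> \<bar>\<mu>\<bar> < 1"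
      then show "\<forall>e\<in>eigenvalues P. \<bar>a * (e - \<alpha>)\<bar> < 1" using eigenpair by (auto simp: eigenvalues_def)
    next
      assume bound: "\<forall>e\<in>eigenvalues P. \<bar>a * (e - \<alpha>)\<bar> < 1"
      show "\<forall>\<mu> v. v \<noteq> 0 \<longrightarrow> ?G v = \<mu> *\<^sub>R v \<longrightarrow> \<bar>\<mu>\<bar> < 1"
      proof (intro allI impI)
        fix \<mu> v assume "v \<noteq> 0" "?G v = \<mu> *\<^sub>R v"
        then have "P *v v = (\<mu> / a + \<alpha>) *\<^sub>R v" using eigenpair[of v "\<mu> / a + \<alpha>"] False by simp
        then have "\<mu> / a + \<alpha> \<in> eigenvalues P" using \<open>v \<noteq> 0\<close> by (auto simp: eigenvalues_def)
        then show "\<bar>\<mu>\<bar> < 1" using bound False by force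
      qed
    qed
  qed
  then show ?thesis using selfadjoint_iterates_tendsto_zero_iff[OF lin sa] by simp
qed

definition mean_error :: "'w measure \<Rightarrow> (nat \<Rightarrow> 'w \<Rightarrow> real^'n) \<Rightarrow> (nat \<Rightarrow> 'w \<Rightarrow> real) \<Rightarrow> nat \<Rightarrow> real^'n"
  where "mean_error M est x t = (\<chi> i. \<integral>\<omega>. est t \<omega> $ i - x t \<omega> \<partial>M)"

lemma mean_error_step_row_stochastic:
  fixes P :: "real^'n::finite^'n"
  assumes rows: "\<And>i. (\<Sum>j\<in>UNIV. P $ i $ j) = 1"
  shows "(\<chi> i. a * ((\<Sum>j\<in>UNIV. P $ i $ j * E j) + \<alpha> * (X - E i)) - a * X)
           = mean_error_step P a \<alpha> (\<chi> j. E j - X)"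
proof (rule iffD2[OF vec_eq_iff], rule allI)
  fix i
  have "(P *v (\<chi> j. E j - X)) $ i = (\<Sum>j\<in>UNIV. P $ i $ j * (E j - X))"
    by (simp add: matrix_vector_mult_def)
  also have "\<dots> = (\<Sum>j\<in>UNIV. P $ i $ j * E j) - X"
    using rows[of i] by (simp add: right_diff_distrib sum_subtractf flip: sum_distrib_right)
  finally have Pv: "(P *v (\<chi> j. E j - X)) $ i = (\<Sum>j\<in>UNIV. P $ i $ j * E j) - X" .
  show "(\<chi> i. a * ((\<Sum>j\<in>UNIV. P $ i $ j * E j) + \<alpha> * (X - E i)) - a * X) $ i
      = mean_error_step P a \<alpha> (\<chi> j. E j - X) $ i"
    by (simp add: mean_error_step_def Pv algebra_simps)
qed

context
  fixes M :: "'w measure" and x0 :: "'w \<Rightarrow> real" and r :: "nat \<Rightarrow> 'w \<Rightarrow> real"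
    and w :: "'n::finite \<Rightarrow> nat \<Rightarrow> 'w \<Rightarrow> real"
  assumes integrable_x0: "integrable M x0"
    and integrable_r: "\<And>t. integrable M (r t)" and mean_r: "\<And>t. integral\<^sup>L M (r t) = 0"
    and integrable_w: "\<And>i t. integrable M (w i t)" and mean_w: "\<And>i t. integral\<^sup>L M (w i t) = 0"
begin

lemma integrable_state [simp]: "integrable M (state a x0 r t)"
  by (induction t) (simp_all add: integrable_x0 integrable_r)

lemma integrable_obs [simp]: "integrable M (obs a x0 r w i t)"
  by (simp add: obs_def[abs_def] integrable_w)

lemma integral_obs [simp]: "integral\<^sup>L M (obs a x0 r w i t) = integral\<^sup>L M (state a x0 r t)"
  by (simp add: obs_def[abs_def] integrable_w mean_w)

context
  fixes c :: "'w \<Rightarrow> real^'n" and P :: "real^'n^'n" and \<alpha> :: real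
  assumes integrable_c: "\<And>i. integrable M (\<lambda>\<omega>. c \<omega> $ i)"
    and rows: "\<And>i. (\<Sum>j\<in>UNIV. P $ i $ j) = 1"
begin

lemma integrable_est_hat [simp]: "integrable M (\<lambda>\<omega>. est_hat P a \<alpha> x0 r w c t \<omega> $ i)"
  by (induction t arbitrary: i) (simp_all add: integrable_c)

lemma integrable_est_tilde [simp]: "integrable M (\<lambda>\<omega>. est_tilde P a \<alpha> x0 r w c t \<omega> $ i)"
  by (induction t arbitrary: i) (simp_all add: integrable_c)

lemma mean_error_est_hat_Suc:
  "mean_error M (est_hat P a \<alpha> x0 r w c) (state a x0 r) (Suc t)
     = mean_error_step P a \<alpha> (mean_error M (est_hat P a \<alpha> x0 r w c) (state a x0 r) t)"
proof -
  define E where "E j = (\<integral>\<omega>. est_hat P a \<alpha> x0 r w c t \<omega> $ j \<partial>M)" for j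
  define X where "X = (\<integral>\<omega>. state a x0 r t \<omega> \<partial>M)"
  have "mean_error M (est_hat P a \<alpha> x0 r w c) (state a x0 r) (Suc t)
      = (\<chi> i. a * ((\<Sum>j\<in>UNIV. P $ i $ j * E j) + \<alpha> * (X - E i)) - a * X)"
    by (simp add: mean_error_def E_def X_def integrable_r mean_r)
  also have "\<dots> = mean_error_step P a \<alpha> (\<chi> j. E j - X)"
    by (rule mean_error_step_row_stochastic[OF rows])
  also have "(\<chi> j. E j - X) = mean_error M (est_hat P a \<alpha> x0 r w c) (state a x0 r) t"
    by (simp add: mean_error_def E_def X_def)
  finally show ?thesis .
qed

lemma mean_error_est_tilde_Suc:
  "mean_error M (est_tilde P a \<alpha> x0 r w c) (state a x0 r) (Suc t)
     = mean_error_step P a \<alpha> (mean_error M (est_tilde P a \<alpha> x0 r w c) (state a x0 r) t)"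
proof -
  define E where "E j = (\<integral>\<omega>. est_tilde P a \<alpha> x0 r w c t \<omega> $ j \<partial>M)" for j
  define X where "X = (\<integral>\<omega>. state a x0 r t \<omega> \<partial>M)"
  have "(\<Sum>j\<in>UNIV. P $ i $ j * X) = X" for i
    using rows[of i] by (simp flip: sum_distrib_right)
  then have "mean_error M (est_tilde P a \<alpha> x0 r w c) (state a x0 r) (Suc t)
      = (\<chi> i. a * ((\<Sum>j\<in>UNIV. P $ i $ j * E j) + \<alpha> * (X - E i)) - a * X)"
    by (simp add: mean_error_def E_def X_def integrable_r mean_r)
  also have "\<dots> = mean_error_step P a \<alpha> (\<chi> j. E j - X)"
    by (rule mean_error_step_row_stochastic[OF rows])
  also have "(\<chi> j. E j - X) = mean_error M (est_tilde P a \<alpha> x0 r w c) (state a x0 r) t"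
    by (simp add: mean_error_def E_def X_def)
  finally show ?thesis .
qed

lemma mean_error_est_hat_iterates:
  "mean_error M (est_hat P a \<alpha> x0 r w c) (state a x0 r) t
     = (mean_error_step P a \<alpha> ^^ t) (mean_error M (est_hat P a \<alpha> x0 r w c) (state a x0 r) 0)"
  by (induction t) (simp_all add: mean_error_est_hat_Suc)

lemma mean_error_est_tilde_iterates:
  "mean_error M (est_tilde P a \<alpha> x0 r w c) (state a x0 r) t
     = (mean_error_step P a \<alpha> ^^ t) (mean_error M (est_tilde P a \<alpha> x0 r w c) (state a x0 r) 0)"
  by (induction t) (simp_all add: mean_error_est_tilde_Suc)

end

lemma asymp_unbiased_iff_mean_error_step_iterates:
  fixes P :: "real^'n^'n"
  assumes "prob_space M" and rows: "\<And>i. (\<Sum>j\<in>UNIV. P $ i $ j) = 1"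
  shows "asymp_unbiased M P a x0 r w \<alpha> \<longleftrightarrow> (\<forall>v. (\<lambda>t. (mean_error_step P a \<alpha> ^^ t) v) \<longlonglongrightarrow> 0)"
proof -
  interpret prob_space M by fact
  have unbiased_iff: "asymp_unbiased M P a x0 r w \<alpha> \<longleftrightarrow>
      (\<forall>c. (\<forall>i. integrable M (\<lambda>\<omega>. c \<omega> $ i)) \<longrightarrow>
         mean_error M (est_hat P a \<alpha> x0 r w c) (state a x0 r) \<longlonglongrightarrow> 0 \<and>
         mean_error M (est_tilde P a \<alpha> x0 r w c) (state a x0 r) \<longlonglongrightarrow> 0)"
  proof -
    have component: "(\<lambda>t. \<integral>\<omega>. est t \<omega> $ i - x t \<omega> \<partial>M) = (\<lambda>t. mean_error M est x t $ i)"
      for est :: "nat \<Rightarrow> 'w \<Rightarrow> real^'n" and x i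
      by (simp add: mean_error_def)
    have vec: "(\<forall>i. (\<lambda>t. f t $ i) \<longlonglongrightarrow> 0) \<longleftrightarrow> f \<longlonglongrightarrow> 0" for f :: "nat \<Rightarrow> real^'n"
      using vec_tendstoI[of f 0] tendsto_vec_nth[of f 0] by auto
    show ?thesis
      unfolding asymp_unbiased_def component by (simp add: all_conj_distrib vec)
  qed
  show ?thesis
  proof
    assume unbiased: "asymp_unbiased M P a x0 r w \<alpha>"
    show "\<forall>v. (\<lambda>t. (mean_error_step P a \<alpha> ^^ t) v) \<longlonglongrightarrow> 0"
    proof
      fix v :: "real^'n"
      \<comment> \<open>a deterministic initial estimate whose mean error is \<open>v\<close>\<close>
      define c where "c = (\<lambda>\<omega>::'w. v + (\<integral>\<omega>. x0 \<omega> \<partial>M) *\<^sub>R (\<chi> i. 1))"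
      have c: "integrable M (\<lambda>\<omega>. c \<omega> $ i)" for i by (simp add: c_def)
      have initial: "mean_error M (est_hat P a \<alpha> x0 r w c) (state a x0 r) 0 = v"
        by (simp add: mean_error_def c_def vec_eq_iff integrable_x0 prob_space)
      have "mean_error M (est_hat P a \<alpha> x0 r w c) (state a x0 r) \<longlonglongrightarrow> 0"
        using unbiased c unfolding unbiased_iff by blast
      then show "(\<lambda>t. (mean_error_step P a \<alpha> ^^ t) v) \<longlonglongrightarrow> 0"
        by (simp only: initial[symmetric] mean_error_est_hat_iterates[OF c rows, symmetric])
    qed
  next
    assume lim: "\<forall>v. (\<lambda>t. (mean_error_step P a \<alpha> ^^ t) v) \<longlonglongrightarrow> 0"
    show "asymp_unbiased M P a x0 r w \<alpha>"
      unfolding unbiased_iff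
    proof (intro allI impI conjI)
      fix c :: "'w \<Rightarrow> real^'n" assume "\<forall>i. integrable M (\<lambda>\<omega>. c \<omega> $ i)"
      then have c: "integrable M (\<lambda>\<omega>. c \<omega> $ i)" for i by blast
      have "(\<lambda>t. (mean_error_step P a \<alpha> ^^ t) (mean_error M (est_hat P a \<alpha> x0 r w c) (state a x0 r) 0))
          \<longlonglongrightarrow> 0"
        using lim by blast
      then show "mean_error M (est_hat P a \<alpha> x0 r w c) (state a x0 r) \<longlonglongrightarrow> 0"
        by (simp only: mean_error_est_hat_iterates[OF c rows, symmetric])
      have "(\<lambda>t. (mean_error_step P a \<alpha> ^^ t) (mean_error M (est_tilde P a \<alpha> x0 r w c) (state a x0 r) 0))
          \<longlonglongrightarrow> 0"
        using lim by blast
      then show "mean_error M (est_tilde P a \<alpha> x0 r w c) (state a x0 r) \<longlonglongrightarrow> 0"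
        by (simp only: mean_error_est_tilde_iterates[OF c rows, symmetric])
    qed
  qed
qed

end

lemma exists_weight_contracting_iff:
  fixes S :: "real set" and m a :: real
  assumes "m \<in> S" and "1 \<in> S" and S: "\<And>e. e \<in> S \<Longrightarrow> m \<le> e \<and> e \<le> 1" and "-1 < m" and "m < 1"
  shows "(\<exists>\<alpha>. 0 < \<alpha> \<and> \<alpha> \<le> 1 \<and> (\<forall>e\<in>S. \<bar>a * (e - \<alpha>)\<bar> < 1)) \<longleftrightarrow> \<bar>a\<bar> < 2 / (1 - m)"
proof
  assume "\<exists>\<alpha>. 0 < \<alpha> \<and> \<alpha> \<le> 1 \<and> (\<forall>e\<in>S. \<bar>a * (e - \<alpha>)\<bar> < 1)"
  then obtain \<alpha> where contr: "\<forall>e\<in>S. \<bar>a * (e - \<alpha>)\<bar> < 1" by blast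
  have "a * (1 - \<alpha>) - a * (m - \<alpha>) = a * (1 - m)" by (simp add: algebra_simps)
  then have "\<bar>a\<bar> * (1 - m) = \<bar>a * (1 - \<alpha>) - a * (m - \<alpha>)\<bar>"
    using \<open>m < 1\<close> by (simp add: abs_mult)
  also have "\<dots> \<le> \<bar>a * (1 - \<alpha>)\<bar> + \<bar>a * (m - \<alpha>)\<bar>" by (rule abs_triangle_ineq4)
  also have "\<dots> < 2" using contr[rule_format, OF \<open>1 \<in> S\<close>] contr[rule_format, OF \<open>m \<in> S\<close>] by linarith
  finally show "\<bar>a\<bar> < 2 / (1 - m)" using \<open>m < 1\<close> by (simp add: pos_less_divide_eq)
next
  assume a: "\<bar>a\<bar> < 2 / (1 - m)"
  define \<alpha> where "\<alpha> = (1 + m) / 2"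
  have "\<bar>a * (e - \<alpha>)\<bar> < 1" if "e \<in> S" for e
  proof -
    have "m \<le> e" "e \<le> 1" using S[OF that] by auto
    then have "\<bar>e - \<alpha>\<bar> \<le> (1 - m) / 2" unfolding \<alpha>_def by (simp add: abs_le_iff field_simps)
    then have "\<bar>a * (e - \<alpha>)\<bar> \<le> \<bar>a\<bar> * ((1 - m) / 2)" unfolding abs_mult by (rule mult_left_mono) simp
    also have "\<dots> < 1" using a \<open>m < 1\<close> by (simp add: pos_less_divide_eq)
    finally show ?thesis .
  qed
  moreover have "0 < \<alpha>" "\<alpha> \<le> 1" using \<open>-1 < m\<close> \<open>m < 1\<close> by (auto simp: \<alpha>_def)
  ultimately show "\<exists>\<alpha>. 0 < \<alpha> \<and> \<alpha> \<le> 1 \<and> (\<forall>e\<in>S. \<bar>a * (e - \<alpha>)\<bar> < 1)" by blast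
qed

theorem proposition1:
  fixes P :: "real^'n::finite^'n" and a :: real
    and M :: "'w measure" and x0 :: "'w \<Rightarrow> real"
    and r :: "nat \<Rightarrow> 'w \<Rightarrow> real" and w :: "'n \<Rightarrow> nat \<Rightarrow> 'w \<Rightarrow> real"
  assumes "CARD('n) \<ge> 2"
    and "symmetric_matrix P" and "doubly_stochastic P" and "spectral_condition P"
    and "prob_space M"
    and "integrable M x0"
    and "\<And>t. integrable M (r t)" and "\<And>t. integral\<^sup>L M (r t) = 0"
    and "\<And>i t. integrable M (w i t)" and "\<And>i t. integral\<^sup>L M (w i t) = 0"
  shows "(\<exists>\<alpha>. 0 < \<alpha> \<and> \<alpha> \<le> 1 \<and> asymp_unbiased M P a x0 r w \<alpha>)
           \<longleftrightarrow> \<bar>a\<bar> < 2 / (1 - lambda_min P)"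
proof -
  note N = assms(1) and sym = assms(2) and spec = assms(4)
  have rows: "\<And>i. (\<Sum>j\<in>UNIV. P $ i $ j) = 1"
    using assms(3) by (simp add: doubly_stochastic_def)
  have unbiased_iff: "asymp_unbiased M P a x0 r w \<alpha> \<longleftrightarrow> (\<forall>e\<in>eigenvalues P. \<bar>a * (e - \<alpha>)\<bar> < 1)" for \<alpha>
    using asymp_unbiased_iff_mean_error_step_iterates[OF assms(6-10) assms(5) rows]
      mean_error_step_iterates_tendsto_zero_iff[OF sym] by simp
  have one: "1 \<in> eigenvalues P" and spectrum: "\<And>e. e \<in> eigenvalues P \<Longrightarrow> -1 < e \<and> e \<le> 1"
    using spec by (auto simp: spectral_condition_def)
  then have "lambda_min P \<in> eigenvalues P" and "\<And>e. e \<in> eigenvalues P \<Longrightarrow> lambda_min P \<le> e"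
    using lambda_min_eigenvalue[OF sym] by blast+
  then show ?thesis
    unfolding unbiased_iff
    by (intro exists_weight_contracting_iff one lambda_min_less_one[OF sym spec N])
      (auto dest: spectrum)
qed

end
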